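(* Let $t\ge1$ be an integer, $\varepsilon\in(0,\frac12)$, and $q=\frac{88t}{\varepsilon}$ (assumed to be an integer). Suppose $f:\{0,1\}^d\to\{0,1\}$ is $\varepsilon$-far from linear, and let $x_1,\dots,x_q$ be sampled uniformly and independently from $\{0,1\}^d$. Let $Y$ be the number of pairs $(i,j)\in[q]^2$ with $i<j$ such that $f(x_i)+f(x_j)\neq f(x_i\oplus x_j)$ (mod 2). Then $\Pr\big[Y\le\frac\varepsilon4\binom q2\big]\le 0.25$.
   Context: $\oplus$ denotes bitwise XOR. $f:\{0,1\}^d\to\{0,1\}$ is linear if there is $S\subseteq[d]$ with $f(x)=\sum_{i\in S}x[i]\bmod 2$; $f$ is $\varepsilon$-far from linear if it differs from every linear function on at least an $\varepsilon$ fraction of $\{0,1\}^d$. *)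

theory Defs
  imports "HOL-Probability.Probability"
begin

text \<open>The Boolean cube {0,1}^d, points as bool lists of length d (True = 1).\<close>
definition cube :: "nat \<Rightarrow> bool list set" where
  "cube d = {x. length x = d}"

definition xorv :: "bool list \<Rightarrow> bool list \<Rightarrow> bool list" where
  "xorv x y = map2 (\<noteq>) x y"

definition lin_fun :: "nat set \<Rightarrow> bool list \<Rightarrow> bool" where
  "lin_fun S x = odd (card {i\<in>S. x ! i})"

definition is_linear :: "nat \<Rightarrow> (bool list \<Rightarrow> bool) \<Rightarrow> bool" where
  "is_linear d g \<longleftrightarrow> (\<exists>S\<subseteq>{..<d}. \<forall>x\<in>cube d. g x = lin_fun S x)"

definition eps_far_from_linear :: "nat \<Rightarrow> real \<Rightarrow> (bool list \<Rightarrow> bool) \<Rightarrow> bool" where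
  "eps_far_from_linear d \<epsilon> f \<longleftrightarrow>
     (\<forall>g. is_linear d g \<longrightarrow> real (card {x\<in>cube d. f x \<noteq> g x}) \<ge> \<epsilon> * 2 ^ d)"

definition violations :: "(bool list \<Rightarrow> bool) \<Rightarrow> nat \<Rightarrow> (nat \<Rightarrow> bool list) \<Rightarrow> nat" where
  "violations f q xs = card {(i, j). i < j \<and> j < q \<and>
      ((f (xs i) \<noteq> f (xs j)) \<noteq> f (xorv (xs i) (xs j)))}"

end

theory Submission
  imports Defs
begin

text \<open>
  Let F = (-1)^f and let F'(s) = \<Sum>_x F(x) \<chi>_s(x) be its unnormalised Fourier transform on
  {0,1}^d. Fourier inversion gives
  2^d \<Sum>_{x,y} F(x) F(y) F(x \<oplus> y) = \<Sum>_s F'(s)^3 \<le> max_s F'(s) \<cdot> \<Sum>_s F'(s)^2.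
  Each \<chi>_s is -1 raised to a linear function, so \<epsilon>-farness bounds every F'(s) by 2^d (1 - 2\<epsilon>),
  and Parseval gives \<Sum>_s F'(s)^2 = 4^d. Hence a uniformly random pair (x, y) violates
  linearity with probability p \<ge> \<epsilon> (Blum-Luby-Rubinfeld).

  The number Y of violating pairs among q samples has mean (q choose 2) p. Index pairs without a
  common index give independent indicators, and each pair meets at most 4q others, so
  Var Y \<le> 4q (q choose 2) p. Chebyshev then bounds Pr[Y \<le> (q choose 2) p / 4] by
  128 / (9 (q - 1) p), which is at most 1/4 once q \<epsilon> \<ge> 88.
\<close>

section \<open>Characters of the Boolean cube\<close>

lemma xorv_Nil [simp]: "xorv [] y = []" "xorv x [] = []"
  by (simp_all add: xorv_def)

lemma xorv_Cons [simp]: "xorv (a # x) (b # y) = (a \<noteq> b) # xorv x y"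
  by (simp add: xorv_def)

lemma length_xorv [simp]: "length (xorv x y) = min (length x) (length y)"
  by (simp add: xorv_def)

lemma xorv_eq_replicate_False_iff:
  "length x = length y \<Longrightarrow> xorv x y = replicate (length x) False \<longleftrightarrow> x = y"
  by (induction x y rule: list_induct2) auto

lemma xorv_in_cube: "x \<in> cube d \<Longrightarrow> y \<in> cube d \<Longrightarrow> xorv x y \<in> cube d"
  by (simp add: cube_def)

lemma cube_Suc: "cube (Suc d) = Cons True ` cube d \<union> Cons False ` cube d"
  by (auto simp: cube_def length_Suc_conv)

lemma cube_eq_lists: "cube d = {xs. set xs \<subseteq> UNIV \<and> length xs = d}"
  by (auto simp: cube_def)

lemma finite_cube [simp]: "finite (cube d)"
  unfolding cube_eq_lists by (rule finite_lists_length_eq) simp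

lemma card_cube: "card (cube d) = 2 ^ d"
  using card_lists_length_eq[of "UNIV :: bool set" d] by (simp add: cube_eq_lists)

lemma cube_nonempty: "cube d \<noteq> {}"
  by (auto simp: cube_def intro: exI[of _ "replicate d False"])

fun dot_mod2 :: "bool list \<Rightarrow> bool list \<Rightarrow> bool" where
  "dot_mod2 (a # s) (b # x) = ((a \<and> b) \<noteq> dot_mod2 s x)"
| "dot_mod2 _ _ = False"

lemma dot_mod2_commute: "dot_mod2 s x = dot_mod2 x s"
  by (induction s x rule: dot_mod2.induct) (auto elim: dot_mod2.elims)

lemma dot_mod2_xorv:
  "length x = length y \<Longrightarrow> dot_mod2 s (xorv x y) = (dot_mod2 s x \<noteq> dot_mod2 s y)"
proof (induction s arbitrary: x y)
  case (Cons a s)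
  then show ?case by (cases x; cases y) auto
qed simp

lemma dot_mod2_eq_lin_fun:
  assumes "length x = length s"
  shows "dot_mod2 s x = lin_fun {i. i < length s \<and> s ! i} x"
  using assms
proof (induction s x rule: list_induct2')
  case (4 a s b x)
  let ?A = "\<lambda>s x. {i. i < length s \<and> s ! i \<and> x ! i}"
  have "?A (a # s) (b # x) = (if a \<and> b then {0} else {}) \<union> Suc ` ?A s x"
  proof (rule set_eqI)
    fix i
    show "i \<in> ?A (a # s) (b # x) \<longleftrightarrow> i \<in> (if a \<and> b then {0} else {}) \<union> Suc ` ?A s x"
      by (cases i) auto
  qed
  then have "card (?A (a # s) (b # x)) = (if a \<and> b then 1 else 0) + card (?A s x)"
    by (simp add: card_image card_insert_if)
  moreover have "{i \<in> {i. i < length s \<and> s ! i}. x ! i} = ?A s x" for s x :: "bool list"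
    by auto
  ultimately show ?case using 4 by (auto simp: lin_fun_def)
qed (simp_all add: lin_fun_def)

lemma is_linear_dot_mod2: "s \<in> cube d \<Longrightarrow> is_linear d (dot_mod2 s)"
  unfolding is_linear_def
  by (intro exI[of _ "{i. i < d \<and> s ! i}"]) (auto simp: cube_def dot_mod2_eq_lin_fun)

definition character :: "bool list \<Rightarrow> bool list \<Rightarrow> real" where
  "character s x = (if dot_mod2 s x then -1 else 1)"

lemma character_commute: "character s x = character x s"
  by (simp add: character_def dot_mod2_commute)

lemma character_Cons:
  "character (a # s) (b # x) = (if a \<and> b then - character s x else character s x)"
  by (simp add: character_def)

lemma character_xorv:
  "length x = length y \<Longrightarrow> character s (xorv x y) = character s x * character s y"
  by (simp add: character_def dot_mod2_xorv)

lemma sum_character: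
  "s \<in> cube d \<Longrightarrow> (\<Sum>x\<in>cube d. character s x) = (if s = replicate d False then 2 ^ d else 0)"
proof (induction d arbitrary: s)
  case 0
  then show ?case by (simp add: cube_def character_def)
next
  case (Suc d)
  then obtain a s' where s: "s = a # s'" "s' \<in> cube d"
    by (cases s) (auto simp: cube_def)
  have "(\<Sum>x\<in>cube (Suc d). character s x)
      = (\<Sum>x\<in>Cons True ` cube d. character s x) + (\<Sum>x\<in>Cons False ` cube d. character s x)"
    unfolding cube_Suc by (rule sum.union_disjoint) auto
  also have "\<dots> = (\<Sum>x\<in>cube d. character s (True # x)) + (\<Sum>x\<in>cube d. character s (False # x))"
    by (simp add: sum.reindex)
  also have "\<dots> = (if a then 0 else 2 * (\<Sum>x\<in>cube d. character s' x))"
    by (cases a) (simp_all add: s character_Cons sum_negf)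
  also have "\<dots> = (if s = replicate (Suc d) False then 2 ^ Suc d else 0)"
    using Suc.IH[OF s(2)] by (cases "s' = replicate d False") (simp_all add: s)
  finally show ?case .
qed

lemma sum_character_mult:
  assumes "x \<in> cube d" "y \<in> cube d"
  shows "(\<Sum>s\<in>cube d. character s x * character s y) = (if x = y then 2 ^ d else 0)"
proof -
  have "(\<Sum>s\<in>cube d. character s x * character s y) = (\<Sum>s\<in>cube d. character (xorv x y) s)"
    using assms by (simp add: character_xorv character_commute cube_def)
  moreover have "xorv x y = replicate d False \<longleftrightarrow> x = y"
    using assms xorv_eq_replicate_False_iff[of x y] by (simp add: cube_def)
  ultimately show ?thesis
    using assms by (simp add: sum_character xorv_in_cube)
qed

definition fourier :: "nat \<Rightarrow> (bool list \<Rightarrow> real) \<Rightarrow> bool list \<Rightarrow> real" where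
  "fourier d F s = (\<Sum>x\<in>cube d. F x * character s x)"

lemma fourier_inversion:
  assumes "z \<in> cube d"
  shows "(\<Sum>s\<in>cube d. fourier d F s * character s z) = 2 ^ d * F z"
proof -
  have "(\<Sum>s\<in>cube d. fourier d F s * character s z)
      = (\<Sum>x\<in>cube d. F x * (\<Sum>s\<in>cube d. character s x * character s z))"
    unfolding fourier_def sum_distrib_left sum_distrib_right
    by (subst sum.swap) (simp add: mult_ac)
  also have "\<dots> = 2 ^ d * F z"
    using assms by (simp add: sum_character_mult if_distrib sum.delta cong: if_cong)
  finally show ?thesis .
qed

lemma parseval: "(\<Sum>s\<in>cube d. fourier d F s ^ 2) = 2 ^ d * (\<Sum>x\<in>cube d. F x ^ 2)"
proof -
  have "(\<Sum>s\<in>cube d. fourier d F s ^ 2) = (\<Sum>x\<in>cube d. F x * (\<Sum>s\<in>cube d. fourier d F s * character s x))"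
    unfolding power2_eq_square fourier_def[of d F] sum_distrib_left sum_distrib_right
    by (subst sum.swap) (simp add: mult_ac)
  also have "\<dots> = (\<Sum>x\<in>cube d. F x * (2 ^ d * F x))"
    by (intro sum.cong refl) (simp add: fourier_inversion)
  also have "\<dots> = 2 ^ d * (\<Sum>x\<in>cube d. F x ^ 2)"
    by (simp add: sum_distrib_left power2_eq_square mult_ac)
  finally show ?thesis .
qed

lemma triple_correlation_eq_sum_fourier_cubed:
  "2 ^ d * (\<Sum>x\<in>cube d. \<Sum>y\<in>cube d. F x * F y * F (xorv x y)) = (\<Sum>s\<in>cube d. fourier d F s ^ 3)"
proof -
  have "2 ^ d * (\<Sum>x\<in>cube d. \<Sum>y\<in>cube d. F x * F y * F (xorv x y))
      = (\<Sum>x\<in>cube d. \<Sum>y\<in>cube d. F x * F y * (2 ^ d * F (xorv x y)))"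
    by (simp add: sum_distrib_left mult_ac)
  also have "\<dots> = (\<Sum>x\<in>cube d. \<Sum>y\<in>cube d. F x * F y *
                     (\<Sum>s\<in>cube d. fourier d F s * character s x * character s y))"
    by (intro sum.cong refl)
      (simp add: fourier_inversion[symmetric] xorv_in_cube character_xorv cube_def mult.assoc)
  also have "\<dots> = (\<Sum>x\<in>cube d. \<Sum>y\<in>cube d. \<Sum>s\<in>cube d.
           fourier d F s * (F x * character s x) * (F y * character s y))"
    by (simp add: sum_distrib_left mult_ac)
  also have "\<dots> = (\<Sum>x\<in>cube d. \<Sum>s\<in>cube d. \<Sum>y\<in>cube d.
           fourier d F s * (F x * character s x) * (F y * character s y))"
    by (rule sum.cong[OF refl], rule sum.swap)
  also have "\<dots> = (\<Sum>s\<in>cube d. \<Sum>x\<in>cube d. \<Sum>y\<in>cube d.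
           fourier d F s * (F x * character s x) * (F y * character s y))"
    by (rule sum.swap)
  also have "\<dots> = (\<Sum>s\<in>cube d. fourier d F s *
           (\<Sum>x\<in>cube d. F x * character s x) * (\<Sum>y\<in>cube d. F y * character s y))"
    by (simp add: sum_product sum_distrib_left mult_ac)
  finally show ?thesis
    by (simp add: fourier_def power3_eq_cube)
qed

section \<open>The Blum-Luby-Rubinfeld bound\<close>

definition pm_of :: "(bool list \<Rightarrow> bool) \<Rightarrow> bool list \<Rightarrow> real" where
  "pm_of g x = (if g x then -1 else 1)"

lemma pm_of_squared [simp]: "pm_of g x ^ 2 = 1"
  by (simp add: pm_of_def)

lemma character_eq_pm_of: "character s = pm_of (dot_mod2 s)"
  by (simp add: fun_eq_iff character_def pm_of_def)

lemma fourier_pm_of_eq_disagreements: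
  "fourier d (pm_of f) s = 2 ^ d - 2 * real (card {x \<in> cube d. f x \<noteq> dot_mod2 s x})"
proof -
  have "fourier d (pm_of f) s = (\<Sum>x\<in>cube d. 1 - 2 * (if f x \<noteq> dot_mod2 s x then 1 else 0))"
    unfolding fourier_def character_eq_pm_of by (intro sum.cong refl) (simp add: pm_of_def)
  also have "\<dots> = 2 ^ d - 2 * real (card {x \<in> cube d. f x \<noteq> dot_mod2 s x})"
    by (simp add: sum_subtractf sum_distrib_left[symmetric] card_cube sum.If_cases Int_def conj_commute)
  finally show ?thesis .
qed

lemma fourier_pm_of_le_if_far:
  assumes "eps_far_from_linear d \<epsilon> f" and "s \<in> cube d"
  shows "fourier d (pm_of f) s \<le> 2 ^ d * (1 - 2 * \<epsilon>)"
proof -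
  have "\<epsilon> * 2 ^ d \<le> real (card {x \<in> cube d. f x \<noteq> dot_mod2 s x})"
    using assms is_linear_dot_mod2 unfolding eps_far_from_linear_def by blast
  then show ?thesis
    by (simp add: fourier_pm_of_eq_disagreements algebra_simps)
qed

definition pair_mean :: "'a set \<Rightarrow> ('a \<Rightarrow> 'a \<Rightarrow> real) \<Rightarrow> real" where
  "pair_mean C g = (\<Sum>x\<in>C. \<Sum>y\<in>C. g x y) / real (card C) ^ 2"

definition violation_indicator :: "(bool list \<Rightarrow> bool) \<Rightarrow> bool list \<Rightarrow> bool list \<Rightarrow> real" where
  "violation_indicator f x y = (if (f x \<noteq> f y) \<noteq> f (xorv x y) then 1 else 0)"

theorem blr_pair_mean_ge_if_far:
  assumes "eps_far_from_linear d \<epsilon> f"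
  shows "\<epsilon> \<le> pair_mean (cube d) (violation_indicator f)"
proof -
  let ?F = "pm_of f"
  define T where "T = (\<Sum>x\<in>cube d. \<Sum>y\<in>cube d. ?F x * ?F y * ?F (xorv x y))"
  have "2 ^ d * T = (\<Sum>s\<in>cube d. fourier d ?F s * fourier d ?F s ^ 2)"
    unfolding T_def triple_correlation_eq_sum_fourier_cubed
    by (simp add: power3_eq_cube power2_eq_square mult.assoc)
  also have "\<dots> \<le> (\<Sum>s\<in>cube d. 2 ^ d * (1 - 2 * \<epsilon>) * fourier d ?F s ^ 2)"
    by (intro sum_mono mult_right_mono fourier_pm_of_le_if_far[OF assms]) auto
  also have "\<dots> = 2 ^ d * ((1 - 2 * \<epsilon>) * 4 ^ d)"
    by (simp add: sum_distrib_left[symmetric] parseval card_cube power_mult_distrib[symmetric])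
  finally have T: "T \<le> (1 - 2 * \<epsilon>) * 4 ^ d"
    by simp
  have "(\<Sum>x\<in>cube d. \<Sum>y\<in>cube d. violation_indicator f x y)
      = (\<Sum>x\<in>cube d. \<Sum>y\<in>cube d. (1 - ?F x * ?F y * ?F (xorv x y)) / 2)"
    by (intro sum.cong refl) (simp add: pm_of_def violation_indicator_def)
  also have "\<dots> = (4 ^ d - T) / 2"
    by (simp add: T_def sum_subtractf diff_divide_distrib sum_divide_distrib[symmetric] card_cube
        power_mult_distrib[symmetric])
  finally have "(\<Sum>x\<in>cube d. \<Sum>y\<in>cube d. violation_indicator f x y) = (4 ^ d - T) / 2" .
  moreover have "real (card (cube d)) ^ 2 = 4 ^ d"
    by (simp add: card_cube power2_eq_square flip: power_mult_distrib)
  ultimately show ?thesis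
    using T by (simp add: pair_mean_def field_simps)
qed

section \<open>Concentration of the number of violated pairs\<close>

definition increasing_pairs :: "nat \<Rightarrow> (nat \<times> nat) set" where
  "increasing_pairs q = {(i, j). i < j \<and> j < q}"

lemma finite_increasing_pairs [simp]: "finite (increasing_pairs q)"
  unfolding increasing_pairs_def by (rule finite_subset[of _ "{..<q} \<times> {..<q}"]) auto

lemma card_increasing_pairs: "card (increasing_pairs q) = q choose 2"
proof (induction q)
  case (Suc q)
  have "increasing_pairs (Suc q) = increasing_pairs q \<union> (\<lambda>i. (i, q)) ` {..<q}"
    by (auto simp: increasing_pairs_def less_Suc_eq)
  moreover have "increasing_pairs q \<inter> (\<lambda>i. (i, q)) ` {..<q} = {}"
    by (auto simp: increasing_pairs_def)
  ultimately show ?case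
    using Suc by (simp add: card_Un_disjoint card_image inj_on_def numeral_2_eq_2)
qed (simp add: increasing_pairs_def)

definition overlapping_pairs :: "nat \<Rightarrow> nat \<Rightarrow> nat \<Rightarrow> (nat \<times> nat) set" where
  "overlapping_pairs q i j = {(k, l) \<in> increasing_pairs q. \<not> distinct [i, j, k, l]}"

lemma card_overlapping_pairs_le:
  assumes "i \<noteq> j"
  shows "card (overlapping_pairs q i j) \<le> 4 * q"
proof -
  have "card (overlapping_pairs q i j) \<le> card ({i, j} \<times> {..<q} \<union> {..<q} \<times> {i, j})"
    using assms by (intro card_mono) (auto simp: overlapping_pairs_def increasing_pairs_def)
  also have "\<dots> \<le> card ({i, j} \<times> {..<q}) + card ({..<q} \<times> {i, j})"
    by (rule card_Un_le)
  also have "\<dots> \<le> 4 * q"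
    by (simp add: card_cartesian_product card_insert_if)
  finally show ?thesis .
qed

lemma sum_PiE_insert:
  assumes "k \<notin> I"
  shows "(\<Sum>xs\<in>PiE (insert k I) B. h xs) = (\<Sum>a\<in>B k. \<Sum>xs\<in>PiE I B. h (xs(k := a)))"
proof -
  have "(\<Sum>xs\<in>PiE (insert k I) B. h xs) = (\<Sum>(a, xs)\<in>B k \<times> PiE I B. h (xs(k := a)))"
    unfolding PiE_insert_eq by (subst sum.reindex[OF inj_combinator[OF assms]]) (simp add: case_prod_unfold)
  then show ?thesis
    by (simp add: sum.cartesian_product)
qed

lemma sum_PiE_two_coords:
  assumes "finite C" "i < q" "j < q" "i \<noteq> j"
  shows "(\<Sum>xs\<in>PiE {..<q} (\<lambda>_. C). g (xs i) (xs j))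
       = real (card C) ^ (q - 2) * (\<Sum>x\<in>C. \<Sum>y\<in>C. g x y)"
proof -
  define R where "R = {..<q} - {i, j}"
  have "{..<q} = insert i (insert j R)" and "i \<notin> insert j R" "j \<notin> R"
    using assms by (auto simp: R_def)
  then have "(\<Sum>xs\<in>PiE {..<q} (\<lambda>_. C). g (xs i) (xs j))
      = (\<Sum>a\<in>C. \<Sum>b\<in>C. \<Sum>xs\<in>PiE R (\<lambda>_. C). g a b)"
    using assms by (simp add: sum_PiE_insert)
  moreover have "card R = q - 2"
    using assms by (simp add: R_def card_Diff_subset)
  ultimately show ?thesis
    by (simp add: card_funcsetE R_def sum_distrib_left sum_distrib_right mult_ac)
qed

lemma sum_PiE_four_coords:
  assumes "finite C" "i < q" "j < q" "k < q" "l < q" "distinct [i, j, k, l]"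
  shows "(\<Sum>xs\<in>PiE {..<q} (\<lambda>_. C). g (xs i) (xs j) * h (xs k) (xs l))
       = real (card C) ^ (q - 4) * (\<Sum>x\<in>C. \<Sum>y\<in>C. g x y) * (\<Sum>x\<in>C. \<Sum>y\<in>C. h x y)"
proof -
  define R where "R = {..<q} - {i, j, k, l}"
  have "{..<q} = insert i (insert j (insert k (insert l R)))"
    and "i \<notin> insert j (insert k (insert l R))" "j \<notin> insert k (insert l R)" "k \<notin> insert l R"
      "l \<notin> R"
    using assms by (auto simp: R_def)
  then have "(\<Sum>xs\<in>PiE {..<q} (\<lambda>_. C). g (xs i) (xs j) * h (xs k) (xs l))
      = (\<Sum>a\<in>C. \<Sum>b\<in>C. \<Sum>c\<in>C. \<Sum>e\<in>C. \<Sum>xs\<in>PiE R (\<lambda>_. C). g a b * h c e)"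
    using assms by (simp add: sum_PiE_insert)
  moreover have "card R = q - 4"
    using assms by (simp add: R_def card_Diff_subset)
  ultimately have "(\<Sum>xs\<in>PiE {..<q} (\<lambda>_. C). g (xs i) (xs j) * h (xs k) (xs l))
      = (\<Sum>a\<in>C. \<Sum>b\<in>C. g a b * (real (card C) ^ (q - 4) * (\<Sum>x\<in>C. \<Sum>y\<in>C. h x y)))"
    by (simp add: card_funcsetE R_def sum_distrib_left sum_distrib_right mult_ac)
  also have "\<dots> = real (card C) ^ (q - 4) * (\<Sum>x\<in>C. \<Sum>y\<in>C. g x y) * (\<Sum>x\<in>C. \<Sum>y\<in>C. h x y)"
    by (simp only: sum_distrib_right[symmetric]) (simp add: mult_ac)
  finally show ?thesis .
qed

abbreviation uniform_vectors :: "nat \<Rightarrow> 'a set \<Rightarrow> (nat \<Rightarrow> 'a) pmf" where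
  "uniform_vectors q C \<equiv> pmf_of_set (PiE {..<q} (\<lambda>_. C))"

lemma PiE_lessThan_nonempty: "C \<noteq> {} \<Longrightarrow> PiE {..<q} (\<lambda>_. C) \<noteq> {}"
  by (simp add: PiE_eq_empty_iff)

lemma integrable_uniform_vectors [simp]:
  fixes g :: "(nat \<Rightarrow> 'a) \<Rightarrow> real"
  assumes "finite C" "C \<noteq> {}"
  shows "integrable (uniform_vectors q C) g"
  using assms by (intro integrable_measure_pmf_finite) (simp add: PiE_lessThan_nonempty finite_PiE)

lemma expectation_uniform_vectors:
  assumes "finite C" "C \<noteq> {}"
  shows "measure_pmf.expectation (uniform_vectors q C) g
       = (\<Sum>xs\<in>PiE {..<q} (\<lambda>_. C). g xs) / real (card C) ^ q"
  using assms by (simp add: integral_pmf_of_set PiE_lessThan_nonempty finite_PiE card_funcsetE)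

lemma expectation_two_coords:
  assumes "finite C" "C \<noteq> {}" "i < q" "j < q" "i \<noteq> j"
  shows "measure_pmf.expectation (uniform_vectors q C) (\<lambda>xs. g (xs i) (xs j)) = pair_mean C g"
proof -
  have "q = q - 2 + 2"
    using assms by linarith
  then have "real (card C) ^ q = real (card C) ^ (q - 2) * real (card C) ^ 2"
    by (metis power_add)
  then show ?thesis
    using assms by (simp add: expectation_uniform_vectors sum_PiE_two_coords pair_mean_def card_gt_0_iff)
qed

lemma expectation_four_coords:
  assumes "finite C" "C \<noteq> {}" "i < q" "j < q" "k < q" "l < q" "distinct [i, j, k, l]"
  shows "measure_pmf.expectation (uniform_vectors q C) (\<lambda>xs. g (xs i) (xs j) * h (xs k) (xs l))
       = pair_mean C g * pair_mean C h"
proof -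
  have "card {i, j, k, l} \<le> card {..<q}"
    using assms by (intro card_mono) auto
  then have "q = q - 4 + 2 + 2"
    using assms(7) by (simp add: card_insert_if)
  then have "real (card C) ^ q = real (card C) ^ (q - 4) * real (card C) ^ 2 * real (card C) ^ 2"
    by (metis power_add)
  then show ?thesis
    using assms by (simp add: expectation_uniform_vectors sum_PiE_four_coords pair_mean_def card_gt_0_iff)
qed

definition pair_sum :: "('a \<Rightarrow> 'a \<Rightarrow> real) \<Rightarrow> nat \<Rightarrow> (nat \<Rightarrow> 'a) \<Rightarrow> real" where
  "pair_sum V q xs = (\<Sum>(i, j)\<in>increasing_pairs q. V (xs i) (xs j))"

lemma expectation_pair_sum:
  assumes "finite C" "C \<noteq> {}"
  shows "measure_pmf.expectation (uniform_vectors q C) (pair_sum V q) = real (q choose 2) * pair_mean C V"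
proof -
  have "measure_pmf.expectation (uniform_vectors q C) (pair_sum V q)
      = (\<Sum>(i, j)\<in>increasing_pairs q. measure_pmf.expectation (uniform_vectors q C) (\<lambda>xs. V (xs i) (xs j)))"
    unfolding pair_sum_def case_prod_unfold using assms by simp
  also have "\<dots> = (\<Sum>_\<in>increasing_pairs q. pair_mean C V)"
    by (intro sum.cong refl) (auto simp: increasing_pairs_def intro!: expectation_two_coords[OF assms])
  finally show ?thesis
    by (simp add: card_increasing_pairs)
qed

lemma pair_mean_nonneg: "(\<And>x y. 0 \<le> V x y) \<Longrightarrow> 0 \<le> pair_mean C V"
  by (simp add: pair_mean_def sum_nonneg)

lemma expectation_pair_product_le:
  assumes "finite C" "C \<noteq> {}" "\<And>x y. 0 \<le> V x y" "\<And>x y. V x y \<le> 1"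
    and "(i, j) \<in> increasing_pairs q" "(k, l) \<in> increasing_pairs q"
  shows "measure_pmf.expectation (uniform_vectors q C) (\<lambda>xs. V (xs i) (xs j) * V (xs k) (xs l))
       \<le> pair_mean C V ^ 2 + (if (k, l) \<in> overlapping_pairs q i j then pair_mean C V else 0)"
proof (cases "distinct [i, j, k, l]")
  case True
  then show ?thesis
    using assms by (simp add: expectation_four_coords increasing_pairs_def overlapping_pairs_def
        power2_eq_square)
next
  case False
  let ?E = "measure_pmf.expectation (uniform_vectors q C)"
  have "?E (\<lambda>xs. V (xs i) (xs j) * V (xs k) (xs l)) \<le> ?E (\<lambda>xs. V (xs i) (xs j))"
    using assms by (intro integral_mono) (auto intro: mult_left_le)
  also have "\<dots> = pair_mean C V"
    using assms by (simp add: expectation_two_coords increasing_pairs_def)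
  finally show ?thesis
    using False assms(6) by (auto simp: overlapping_pairs_def intro: add_increasing)
qed

lemma expectation_pair_sum_squared_le:
  assumes "finite C" "C \<noteq> {}" and V: "\<And>x y. 0 \<le> V x y" "\<And>x y. V x y \<le> 1"
  shows "measure_pmf.expectation (uniform_vectors q C) (\<lambda>xs. pair_sum V q xs ^ 2)
       \<le> (real (q choose 2) * pair_mean C V) ^ 2 + 4 * real q * real (q choose 2) * pair_mean C V"
proof -
  let ?E = "measure_pmf.expectation (uniform_vectors q C)"
  let ?P = "increasing_pairs q" and ?p = "pair_mean C V"
  let ?overlapping = "overlapping_pairs q"
  have "0 \<le> ?p"
    using V(1) by (rule pair_mean_nonneg)
  have pair_bound: "?E (\<lambda>xs. V (xs i) (xs j) * V (xs k) (xs l))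
      \<le> ?p ^ 2 + (if (k, l) \<in> ?overlapping i j then ?p else 0)"
    if "(i, j) \<in> ?P" and "(k, l) \<in> ?P" for i j k l
    by (rule expectation_pair_product_le) (use assms that in auto)
  have "?E (\<lambda>xs. pair_sum V q xs ^ 2)
      = (\<Sum>(i, j)\<in>?P. \<Sum>(k, l)\<in>?P. ?E (\<lambda>xs. V (xs i) (xs j) * V (xs k) (xs l)))"
    unfolding pair_sum_def power2_eq_square sum_product case_prod_unfold
    using assms by (simp add: integral_sum)
  also have "\<dots> \<le> (\<Sum>(i, j)\<in>?P. \<Sum>b\<in>?P. ?p ^ 2 + (if b \<in> ?overlapping i j then ?p else 0))"
    using pair_bound by (intro sum_mono) (auto simp: split_beta intro!: sum_mono)
  also have "\<dots> = (\<Sum>(i, j)\<in>?P. card ?P * ?p ^ 2 + card (?overlapping i j) * ?p)"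
  proof (intro sum.cong refl, clarify)
    fix i j
    have "?P \<inter> ?overlapping i j = ?overlapping i j"
      by (auto simp: overlapping_pairs_def)
    then show "(\<Sum>b\<in>?P. ?p ^ 2 + (if b \<in> ?overlapping i j then ?p else 0))
        = card ?P * ?p ^ 2 + card (?overlapping i j) * ?p"
      by (simp add: sum.distrib sum.If_cases)
  qed
  also have "\<dots> \<le> (\<Sum>_\<in>?P. card ?P * ?p ^ 2 + 4 * q * ?p)"
  proof (intro sum_mono, clarify)
    fix i j
    assume "(i, j) \<in> ?P"
    then have "real (card (?overlapping i j)) \<le> real (4 * q)"
      by (intro of_nat_mono card_overlapping_pairs_le) (auto simp: increasing_pairs_def)
    then show "card ?P * ?p ^ 2 + card (?overlapping i j) * ?p \<le> card ?P * ?p ^ 2 + 4 * q * ?p"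
      using \<open>0 \<le> ?p\<close> by (simp add: mult_right_mono)
  qed
  finally show ?thesis
    by (simp add: card_increasing_pairs power2_eq_square algebra_simps)
qed

lemma prob_pair_sum_le_quarter_mean:
  assumes "finite C" "C \<noteq> {}" "\<And>x y. 0 \<le> V x y" "\<And>x y. V x y \<le> 1"
    and "2 \<le> q" "0 < pair_mean C V"
  shows "measure_pmf.prob (uniform_vectors q C) {xs. pair_sum V q xs \<le> real (q choose 2) * pair_mean C V / 4}
       \<le> 128 / (9 * (real q - 1) * pair_mean C V)"
proof -
  let ?M = "uniform_vectors q C" and ?Y = "pair_sum V q" and ?p = "pair_mean C V"
  define N where "N = real (q choose 2)"
  have N: "N = real q * (real q - 1) / 2"
    using assms(5) by (simp add: N_def choose_two real_of_nat_div of_nat_diff)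
  have "0 < N"
    using assms(5) by (simp add: N)
  have mean: "measure_pmf.expectation ?M ?Y = N * ?p"
    using assms by (simp add: expectation_pair_sum N_def)
  have "measure_pmf.variance ?M ?Y = measure_pmf.expectation ?M (\<lambda>xs. ?Y xs ^ 2) - (N * ?p) ^ 2"
    unfolding mean[symmetric] by (rule measure_pmf.variance_eq) (use assms in simp_all)
  then have var: "measure_pmf.variance ?M ?Y \<le> 4 * real q * N * ?p"
    using expectation_pair_sum_squared_le[of C V q, OF assms(1-4)] by (simp add: N_def)
  have "measure_pmf.prob ?M {xs. ?Y xs \<le> N * ?p / 4}
      \<le> measure_pmf.prob ?M {xs \<in> space ?M. 3 / 4 * (N * ?p) \<le> \<bar>?Y xs - measure_pmf.expectation ?M ?Y\<bar>}"
    using \<open>0 < N\<close> assms(6) by (intro measure_pmf.finite_measure_mono) (auto simp: mean abs_if)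
  also have "\<dots> \<le> measure_pmf.variance ?M ?Y / (3 / 4 * (N * ?p)) ^ 2"
    using \<open>0 < N\<close> assms by (intro measure_pmf.Chebyshev_inequality) auto
  also have "\<dots> \<le> 4 * real q * N * ?p / (3 / 4 * (N * ?p)) ^ 2"
    by (intro divide_right_mono var) simp
  also have "\<dots> = 64 * real q / (9 * N * ?p)"
    using \<open>0 < N\<close> assms(6) by (simp add: field_simps power2_eq_square)
  also have "\<dots> = 128 / (9 * (real q - 1) * ?p)"
    using assms(5) by (simp add: N)
  finally show ?thesis
    by (simp add: N_def)
qed

lemma violations_eq_pair_sum: "real (violations f q xs) = pair_sum (violation_indicator f) q xs"
proof -
  have "{(i, j). i < j \<and> j < q \<and> ((f (xs i) \<noteq> f (xs j)) \<noteq> f (xorv (xs i) (xs j)))}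
      = {(i, j) \<in> increasing_pairs q. (f (xs i) \<noteq> f (xs j)) \<noteq> f (xorv (xs i) (xs j))}"
    by (auto simp: increasing_pairs_def)
  then show ?thesis
    unfolding violations_def pair_sum_def violation_indicator_def
    by (simp add: sum.inter_filter[symmetric] case_prod_unfold)
qed

theorem lemmaB2:
  fixes t q d :: nat and \<epsilon> :: real and f :: "bool list \<Rightarrow> bool"
  assumes "t \<ge> 1" and "0 < \<epsilon>" and "\<epsilon> < 1/2"
    and "real q = 88 * real t / \<epsilon>"
    and "eps_far_from_linear d \<epsilon> f"
  shows "measure_pmf.prob (pmf_of_set (PiE {..<q} (\<lambda>_. cube d)))
           {xs. real (violations f q xs) \<le> \<epsilon> / 4 * real (q choose 2)} \<le> 0.25"
proof -
  let ?V = "violation_indicator f" and ?N = "real (q choose 2)"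
  let ?p = "pair_mean (cube d) ?V"
  have "\<epsilon> \<le> ?p"
    using assms(5) by (rule blr_pair_mean_ge_if_far)
  have "88 \<le> real q * \<epsilon>"
    using assms(1,2,4) by simp
  also have "\<dots> \<le> real q * (1 / 2)"
    using assms(3) by (intro mult_left_mono) auto
  finally have "2 \<le> q"
    by simp
  have "87 \<le> (real q - 1) * \<epsilon>"
    using \<open>88 \<le> real q * \<epsilon>\<close> assms(3) by (simp add: algebra_simps)
  also have "\<dots> \<le> (real q - 1) * ?p"
    using \<open>\<epsilon> \<le> ?p\<close> \<open>2 \<le> q\<close> by (intro mult_left_mono) auto
  finally have "87 \<le> (real q - 1) * ?p" .
  have "\<epsilon> / 4 * ?N \<le> ?N * ?p / 4"
    using \<open>\<epsilon> \<le> ?p\<close> by (simp add: mult_right_mono mult.commute)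
  then have "measure_pmf.prob (uniform_vectors q (cube d)) {xs. real (violations f q xs) \<le> \<epsilon> / 4 * ?N}
      \<le> measure_pmf.prob (uniform_vectors q (cube d)) {xs. pair_sum ?V q xs \<le> ?N * ?p / 4}"
    unfolding violations_eq_pair_sum by (intro measure_pmf.finite_measure_mono) auto
  also have "\<dots> \<le> 128 / (9 * (real q - 1) * ?p)"
    using \<open>2 \<le> q\<close> \<open>\<epsilon> \<le> ?p\<close> assms(2)
    by (intro prob_pair_sum_le_quarter_mean) (auto simp: violation_indicator_def cube_nonempty)
  also have "\<dots> \<le> 0.25"
    using \<open>87 \<le> (real q - 1) * ?p\<close> by (simp add: field_simps)
  finally show ?thesis .
qed

end
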